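(* Let $k\ge1$, $n\ge2$, $\eta\in[0,1/2)$, $p\le n^k$, and let $m$ be such that $\frac mp\ge\frac{24k}{(1-2\eta)^2}\log n$. For each $u\in[p]$ let $\mathcal H_u=\mathcal H_u^{(L)}\sqcup\mathcal H_u^{(R)}$ with $|\mathcal H_u^{(L)}|=|\mathcal H_u^{(R)}|=\frac m{2p}$, let $\xi_u(C)$, $u\in[p]$, $C\in\mathcal H_u$, be i.i.d. random variables equal to $-1$ with probability $\eta$ and $+1$ otherwise, and let $P_u\subseteq\mathcal H_u^{(L)}\times\mathcal H_u^{(R)}$ be fixed sets (independent of the $\xi$'s) with $|P_u|=(1-\varepsilon_u)\frac{m^2}{4p^2}$, $\varepsilon_u\in[0,1]$, and $\frac1p\sum_{u}\varepsilon_u\le\varepsilon$. Run the following procedure given the $P_u$ and the values $\xi_u(C)\xi_u(C')$ for $(C,C')\in P_u$: for each $u$, if $\varepsilon_u\ge1/3$ set $\mathcal A^{(1)}_u=\mathcal H_u$, $\mathcal A^{(2)}_u=\emptyset$; otherwise let $G_u$ be the graph on vertex set $\mathcal H_u$ with edge set $P_u$, let $S_u$ be (the vertex set of) a largest connected component of $G_u$, compute $z\in\{-1,1\}^{S_u}$ with $z_Cz_{C'}=\xi_u(C)\xi_u(C')$ for all edges $(C,C')$ of $G_u$ inside $S_u$ (by fixing $z$ at one vertex and propagating), replace $z$ by $-z$ if $z$ has more than $|S_u|/2$ entries equal to $-1$ (ties broken arbitrarily), and set $\mathcal A^{(1)}_u=\mathcal H_u\setminus S_u$, $\mathcal A^{(2)}_u=\{C\in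 S_u:z_C=-1\}$. Then (1) $\sum_{u\in[p]}|\mathcal A^{(1)}_u|\le4\varepsilon m$, and (2) with probability at least $1-n^{-k}$ over the $\xi$'s, for every $u\in[p]$, $\mathcal A^{(2)}_u=\{C\in\mathcal H_u:\xi_u(C)=-1\}\setminus\mathcal A^{(1)}_u$. *)

theory Defs
  imports "HOL-Probability.Probability"
begin

definition adj :: "('a \<times> 'a) set \<Rightarrow> 'a \<Rightarrow> 'a \<Rightarrow> bool" where
  "adj E x y \<longleftrightarrow> (x, y) \<in> E \<or> (y, x) \<in> E"

definition is_conn_component :: "'a set \<Rightarrow> ('a \<times> 'a) set \<Rightarrow> 'a set \<Rightarrow> bool" where
  "is_conn_component V E S \<longleftrightarrow>
     (\<exists>x\<in>V. S = {y \<in> V. (\<lambda>a b. adj E a b \<and> a \<in> V \<and> b \<in> V)\<^sup>*\<^sup>* x y})"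

definition is_largest_component :: "'a set \<Rightarrow> ('a \<times> 'a) set \<Rightarrow> 'a set \<Rightarrow> bool" where
  "is_largest_component V E S \<longleftrightarrow>
     is_conn_component V E S \<and> (\<forall>S'. is_conn_component V E S' \<longrightarrow> card S' \<le> card S)"

definition sign_labeling :: "'a set \<Rightarrow> ('a \<times> 'a) set \<Rightarrow> ('a \<Rightarrow> int) \<Rightarrow> ('a \<Rightarrow> int) \<Rightarrow> bool" where
  "sign_labeling S E xi z \<longleftrightarrow> z ` S \<subseteq> {-1, 1} \<and>
     (\<forall>C\<in>S. \<forall>C'\<in>S. (C, C') \<in> E \<longrightarrow> z C * z C' = xi C * xi C')"

definition xi_pmf :: "real \<Rightarrow> int pmf" where
  "xi_pmf \<eta> = map_pmf (\<lambda>b. if b then -1 else 1) (bernoulli_pmf \<eta>)"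

definition xi_dist :: "nat \<Rightarrow> (nat \<Rightarrow> 'a set) \<Rightarrow> real \<Rightarrow> (nat \<times> 'a \<Rightarrow> int) pmf" where
  "xi_dist p H \<eta> = Pi_pmf (SIGMA u:{1..p}. H u) 1 (\<lambda>_. xi_pmf \<eta>)"

text \<open>(A1, A2) is a possible output of the procedure (any tie-breaking) on input xi.\<close>
definition procedure_output ::
  "nat \<Rightarrow> (nat \<Rightarrow> 'a set) \<Rightarrow> (nat \<Rightarrow> ('a \<times> 'a) set) \<Rightarrow> (nat \<Rightarrow> real) \<Rightarrow>
   (nat \<times> 'a \<Rightarrow> int) \<Rightarrow> (nat \<Rightarrow> 'a set) \<Rightarrow> (nat \<Rightarrow> 'a set) \<Rightarrow> bool" where
  "procedure_output p H P eps xi A1 A2 \<longleftrightarrow>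
     (\<forall>u\<in>{1..p}.
        if eps u \<ge> 1/3 then A1 u = H u \<and> A2 u = {}
        else (\<exists>S z0 z.
                is_largest_component (H u) (P u) S \<and>
                sign_labeling S (P u) (\<lambda>C. xi (u, C)) z0 \<and>
                (z = z0 \<or> z = (\<lambda>C. - z0 C)) \<and>
                (2 * card {C \<in> S. z0 C = -1} > card S \<longrightarrow> z = (\<lambda>C. - z0 C)) \<and>
                (2 * card {C \<in> S. z0 C = -1} < card S \<longrightarrow> z = z0) \<and>
                A1 u = H u - S \<and> A2 u = {C \<in> S. z C = -1}))"

end

theory Submission
  imports Defs
begin

text \<open>
  Write \<open>a = m / (2 p)\<close>. If \<open>\<epsilon>\<^sub>u < 1/3\<close>, the bipartite graph \<open>G\<^sub>u\<close> misses at most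
  \<open>\<epsilon>\<^sub>u a\<^sup>2\<close> of the \<open>a\<^sup>2\<close> possible edges. The component of a vertex of maximal degree then has
  more than \<open>a\<close> of the \<open>2 a\<close> vertices, so it is the unique largest component, and counting
  the edges it cannot contain shows that it misses at most \<open>2 \<epsilon>\<^sub>u a\<close> vertices; this gives (1).
  On that component the propagated labelling agrees with \<open>\<xi>\<^sub>u\<close> up to a global sign, so the
  majority rule recovers \<open>\<xi>\<^sub>u\<close> unless at least half of its values there are \<open>-1\<close>.
  By Hoeffding's inequality this has probability at most \<open>exp (- a (1 - 2 \<eta>)\<^sup>2 / 2) \<le> n\<^sup>-\<^sup>2\<^sup>k\<close>,
  and a union bound over the \<open>p \<le> n\<^sup>k\<close> blocks gives (2).
\<close>

definition link :: "'a set \<Rightarrow> ('a \<times> 'a) set \<Rightarrow> 'a \<Rightarrow> 'a \<Rightarrow> bool" where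
  "link V E x y \<longleftrightarrow> adj E x y \<and> x \<in> V \<and> y \<in> V"

definition component :: "'a set \<Rightarrow> ('a \<times> 'a) set \<Rightarrow> 'a \<Rightarrow> 'a set" where
  "component V E x = {y \<in> V. (link V E)\<^sup>*\<^sup>* x y}"

lemma is_conn_component_iff: "is_conn_component V E S \<longleftrightarrow> (\<exists>x\<in>V. S = component V E x)"
proof -
  have "link V E = (\<lambda>x y. adj E x y \<and> x \<in> V \<and> y \<in> V)"
    by (simp add: fun_eq_iff link_def)
  then show ?thesis
    by (simp add: is_conn_component_def component_def)
qed

lemma symp_link: "symp (link V E)"
  by (auto intro: sympI simp: link_def adj_def)

lemma component_subset: "component V E x \<subseteq> V"
  by (auto simp: component_def)

lemma in_component_self: "x \<in> V \<Longrightarrow> x \<in> component V E x"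
  by (simp add: component_def)

lemma component_eq:
  assumes "y \<in> component V E x"
  shows "component V E y = component V E x"
proof -
  have xy: "(link V E)\<^sup>*\<^sup>* x y" and yx: "(link V E)\<^sup>*\<^sup>* y x"
    using assms sympD[OF symp_rtranclp[OF symp_link]] by (auto simp: component_def)
  have "(link V E)\<^sup>*\<^sup>* y w \<longleftrightarrow> (link V E)\<^sup>*\<^sup>* x w" for w
    using rtranclp_trans[OF xy, of w] rtranclp_trans[OF yx, of w] by blast
  then show ?thesis
    by (simp add: component_def)
qed

lemma components_disjoint:
  assumes "component V E x \<noteq> component V E y"
  shows "component V E x \<inter> component V E y = {}"
proof (rule ccontr)
  assume "component V E x \<inter> component V E y \<noteq> {}"
  then obtain w where "w \<in> component V E x" and "w \<in> component V E y"
    by blast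
  then show False
    using assms component_eq[of w V E x] component_eq[of w V E y] by simp
qed

lemma component_edge_closed:
  assumes "E \<subseteq> V \<times> V" and "(c, d) \<in> E"
  shows "c \<in> component V E x \<longleftrightarrow> d \<in> component V E x"
proof -
  have "link V E c d" and "link V E d c"
    using assms by (auto simp: link_def adj_def)
  then have "(link V E)\<^sup>*\<^sup>* x c \<longleftrightarrow> (link V E)\<^sup>*\<^sup>* x d"
    using rtranclp.rtrancl_into_rtrancl[of "link V E" x c d]
      rtranclp.rtrancl_into_rtrancl[of "link V E" x d c] by blast
  then show ?thesis
    using assms by (auto simp: component_def)
qed

lemma largest_component_subset:
  assumes "is_largest_component V E S"
  shows "S \<subseteq> V"
proof -
  obtain x where "S = component V E x"
    using assms by (auto simp: is_largest_component_def is_conn_component_iff)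
  then show ?thesis
    using component_subset by simp
qed

lemma component_more_than_half_is_unique_largest:
  assumes "finite V" and "x \<in> V" and "card V < 2 * card (component V E x)"
  shows "is_largest_component V E S \<longleftrightarrow> S = component V E x"
proof -
  let ?C = "component V E x"
  have smaller: "card S' < card ?C" if S': "is_conn_component V E S'" and ne: "S' \<noteq> ?C" for S'
  proof -
    from S' obtain w where S': "S' = component V E w"
      by (auto simp: is_conn_component_iff)
    have fin: "finite (component V E y)" for y
      by (rule finite_subset[OF component_subset assms(1)])
    have "S' \<inter> ?C = {}"
      using components_disjoint[of V E w x] ne S' by simp
    then have "card S' + card ?C = card (S' \<union> ?C)"
      using fin S' by (simp add: card_Un_disjoint)
    also have "\<dots> \<le> card V"
      using assms(1) component_subset[of V E w] component_subset[of V E x] S' by (intro card_mono) auto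
    finally show ?thesis using assms(3) by linarith
  qed
  have C: "is_conn_component V E ?C"
    using assms(2) by (auto simp: is_conn_component_iff)
  show ?thesis
  proof
    assume "is_largest_component V E S"
    then have "is_conn_component V E S" and "card ?C \<le> card S"
      using C by (auto simp: is_largest_component_def)
    then show "S = ?C"
      using smaller[of S] by (meson not_le)
  next
    assume "S = ?C"
    moreover have "card S' \<le> card ?C" if "is_conn_component V E S'" for S'
      using smaller[OF that] by (cases "S' = ?C") auto
    ultimately show "is_largest_component V E S"
      using C by (simp add: is_largest_component_def)
  qed
qed

lemma card_bipartite_edges_le:
  assumes "finite L" and "finite R" and "E \<subseteq> L \<times> R"
    and S: "S = component (L \<union> R) E x"
  shows "card E \<le> card (L \<inter> S) * card (R \<inter> S) + card (L - S) * card (R - S)"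
proof -
  have "E \<subseteq> (L \<inter> S) \<times> (R \<inter> S) \<union> (L - S) \<times> (R - S)"
  proof
    fix e assume "e \<in> E"
    moreover obtain c d where "e = (c, d)" by fastforce
    moreover have "E \<subseteq> (L \<union> R) \<times> (L \<union> R)" using assms(3) by auto
    ultimately show "e \<in> (L \<inter> S) \<times> (R \<inter> S) \<union> (L - S) \<times> (R - S)"
      using component_edge_closed[of E "L \<union> R" c d x] assms(3) S by auto
  qed
  then have "card E \<le> card ((L \<inter> S) \<times> (R \<inter> S) \<union> (L - S) \<times> (R - S))"
    using assms(1,2) by (intro card_mono) auto
  also have "\<dots> \<le> card ((L \<inter> S) \<times> (R \<inter> S)) + card ((L - S) \<times> (R - S))"
    by (rule card_Un_le)
  finally show ?thesis by (simp add: card_cartesian_product)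
qed

lemma exists_out_degree_ge:
  fixes c :: real
  assumes "finite L" and "L \<noteq> {}" and "finite E" and "E \<subseteq> L \<times> R"
    and "c * real (card L) \<le> real (card E)"
  shows "\<exists>v\<in>L. c \<le> real (card (E `` {v}))"
proof (rule ccontr)
  assume "\<not> ?thesis"
  then have "(\<Sum>v\<in>L. real (card (E `` {v}))) < (\<Sum>v\<in>L. c)"
    using assms(1,2) by (intro sum_strict_mono) auto
  moreover have "E = Sigma L (\<lambda>v. E `` {v})"
    using assms(4) by auto
  then have "card E = (\<Sum>v\<in>L. card (E `` {v}))"
    using assms(1,3) by (metis card_SigmaI finite_Image)
  ultimately show False
    using assms(5) by (simp add: mult.commute)
qed

lemma deficit_le_3e:
  fixes a e x y :: real
  assumes "0 < a" and "0 \<le> x" and "0 \<le> y" and "3 * y \<le> a"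
    and "a * (x + y) - 2 * x * y \<le> e * a\<^sup>2"
  shows "x + y \<le> 3 * e * a"
proof -
  have "3 * (x * y) \<le> a * x"
    using mult_left_mono[OF assms(4) assms(2)] by (simp add: algebra_simps)
  then have "a * (x + y) \<le> a * (3 * e * a)"
    using assms(3,5) mult_nonneg_nonneg[OF less_imp_le[OF assms(1)] assms(3)]
    by (simp add: algebra_simps power2_eq_square)
  then show ?thesis using assms(1) by simp
qed

lemma deficit_le_2e:
  fixes a e x y :: real
  assumes "0 < a" and "0 \<le> x" and "0 \<le> y" and "x + y \<le> a"
    and "a * (x + y) - 2 * x * y \<le> e * a\<^sup>2"
  shows "x + y \<le> 2 * e * a"
proof -
  have "2 * x * y \<le> (x + y)\<^sup>2 / 2"
    using sum_squares_ge_zero[of "x - y" 0] by (simp add: power2_eq_square algebra_simps)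
  also have "\<dots> \<le> a * (x + y) / 2"
    using mult_right_mono[OF assms(4), of "x + y"] assms(2,3) by (simp add: power2_eq_square)
  finally have "a * (x + y) \<le> a * (2 * e * a)"
    using assms(5) by (simp add: algebra_simps power2_eq_square)
  then show ?thesis using assms(1) by simp
qed

locale dense_bipartite_graph =
  fixes L R :: "'a set" and E :: "('a \<times> 'a) set" and a :: nat and e :: real
  assumes finite_L: "finite L" and finite_R: "finite R" and disjoint: "L \<inter> R = {}"
    and edges_subset: "E \<subseteq> L \<times> R"
    and card_L: "card L = a" and card_R: "card R = a" and a_pos: "0 < a"
    and card_edges: "real (card E) = (1 - e) * real a ^ 2"
    and e_less: "e < 1/3"
begin

lemma card_vertices: "card (L \<union> R) = 2 * a"
  using finite_L finite_R disjoint card_L card_R by (simp add: card_Un_disjoint)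

lemma finite_vertices: "finite (L \<union> R)"
  using finite_L finite_R by simp

lemma card_component_split:
  assumes "S = component (L \<union> R) E x"
  shows "card S = card (L \<inter> S) + card (R \<inter> S)"
proof -
  have "S = (L \<inter> S) \<union> (R \<inter> S)"
    using assms component_subset[of "L \<union> R" E x] by blast
  moreover have "(L \<inter> S) \<inter> (R \<inter> S) = {}"
    using disjoint by blast
  ultimately show ?thesis
    using finite_L finite_R by (metis card_Un_disjoint finite_Int)
qed

text \<open>Edges can only join the two sides of the component or the two sides of its complement,
  which leaves room for at most \<open>(a - dL) (a - dR) + dL dR\<close> of them.\<close>
lemma component_deficit_bound:
  assumes S: "S = component (L \<union> R) E x"
    and dL: "dL = real a - real (card (L \<inter> S))" and dR: "dR = real a - real (card (R \<inter> S))"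
  shows "real a * (dL + dR) - 2 * dL * dR \<le> e * real a ^ 2"
proof -
  have le: "card (L \<inter> S) \<le> a" "card (R \<inter> S) \<le> a"
    using card_mono[OF finite_L Int_lower1] card_mono[OF finite_R Int_lower1] card_L card_R
    by auto
  have "card (L - S) = a - card (L \<inter> S)" "card (R - S) = a - card (R \<inter> S)"
    using finite_L finite_R card_L card_R by (simp_all add: card_Diff_subset_Int)
  then have "card E \<le> card (L \<inter> S) * card (R \<inter> S) + (a - card (L \<inter> S)) * (a - card (R \<inter> S))"
    using card_bipartite_edges_le[OF finite_L finite_R edges_subset S] by simp
  then have "real (card E) \<le>
      real (card (L \<inter> S)) * real (card (R \<inter> S)) + real (a - card (L \<inter> S)) * real (a - card (R \<inter> S))"
    by (metis of_nat_add of_nat_le_iff of_nat_mult)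
  then have "real (card E) \<le> (real a - dL) * (real a - dR) + dL * dR"
    using le unfolding dL dR by (simp add: of_nat_diff)
  then show ?thesis
    using card_edges by (simp add: algebra_simps power2_eq_square)
qed

lemma neighbours_in_component: "v \<in> L \<Longrightarrow> E `` {v} \<subseteq> R \<inter> component (L \<union> R) E v"
  using component_edge_closed[of E "L \<union> R" v _ v] edges_subset in_component_self[of v "L \<union> R" E]
  by auto

text \<open>A vertex of degree at least \<open>(1 - e) a\<close> forces \<open>dR \<le> e a \<le> a / 3\<close> for its
  component, and then the deficit bound forces \<open>dL + dR \<le> 3 e a < a\<close>.\<close>
lemma giant_component_exists: "\<exists>x\<in>L. real a < real (card (component (L \<union> R) E x))"
proof -
  have "finite E"
    using finite_L finite_R edges_subset by (meson finite_SigmaI finite_subset)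
  moreover have "(1 - e) * real a * real (card L) \<le> real (card E)"
    using card_edges card_L by (simp add: power2_eq_square)
  moreover have "L \<noteq> {}"
    using card_L a_pos by auto
  ultimately obtain v where v: "v \<in> L" and deg: "(1 - e) * real a \<le> real (card (E `` {v}))"
    using exists_out_degree_ge[OF finite_L _ _ edges_subset] card_L by blast
  define C where "C = component (L \<union> R) E v"
  define dL where "dL = real a - real (card (L \<inter> C))"
  define dR where "dR = real a - real (card (R \<inter> C))"
  have "E `` {v} \<subseteq> R \<inter> C"
    using neighbours_in_component v by (simp add: C_def)
  then have "real (card (E `` {v})) \<le> real (card (R \<inter> C))"
    using finite_R by (simp add: card_mono)
  then have dR_le: "dR \<le> e * real a"
    using deg by (simp add: dR_def algebra_simps)
  have "e * real a \<le> real a / 3"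
    using mult_right_mono[of e "1/3" "real a"] e_less by simp
  then have "3 * dR \<le> real a"
    using dR_le by linarith
  moreover have "0 \<le> dL" "0 \<le> dR"
    using card_mono[OF finite_L Int_lower1, of C] card_mono[OF finite_R Int_lower1, of C] card_L card_R
    by (simp_all add: dL_def dR_def)
  ultimately have "dL + dR \<le> 3 * e * real a"
    using deficit_le_3e[of "real a" dL dR e] component_deficit_bound[OF C_def dL_def dR_def] a_pos
    by simp
  also have "\<dots> < real a"
    using e_less a_pos by simp
  finally have "real a < real (card C)"
    using card_component_split[OF C_def] by (simp add: dL_def dR_def)
  then show ?thesis
    using v by (auto simp: C_def)
qed

lemma largest_component_is_giant:
  obtains x where "x \<in> L" and "real a < real (card (component (L \<union> R) E x))"
    and "\<And>S. is_largest_component (L \<union> R) E S \<longleftrightarrow> S = component (L \<union> R) E x"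
proof -
  obtain x where x: "x \<in> L" "real a < real (card (component (L \<union> R) E x))"
    using giant_component_exists by blast
  then have "card (L \<union> R) < 2 * card (component (L \<union> R) E x)"
    using card_vertices by simp
  then show thesis
    using that x component_more_than_half_is_unique_largest[OF finite_vertices] by blast
qed

lemma ex1_largest_component: "\<exists>!S. is_largest_component (L \<union> R) E S"
  by (metis largest_component_is_giant)

lemma largest_component_size:
  assumes "is_largest_component (L \<union> R) E S"
  shows "real a < real (card S)" and "real (card (L \<union> R - S)) \<le> 2 * e * real a"
proof -
  obtain x where "real a < real (card (component (L \<union> R) E x))"
    and S: "S = component (L \<union> R) E x"
    using largest_component_is_giant assms by metis
  then show less: "real a < real (card S)"
    by simp
  define dL where "dL = real a - real (card (L \<inter> S))"
  define dR where "dR = real a - real (card (R \<inter> S))"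
  have "S \<subseteq> L \<union> R"
    using S component_subset by simp
  then have "card (L \<union> R - S) = card (L \<union> R) - card S" and "card S \<le> card (L \<union> R)"
    using finite_vertices by (simp_all add: card_Diff_subset finite_subset card_mono)
  then have missing: "real (card (L \<union> R - S)) = dL + dR"
    using card_component_split[OF S] card_vertices by (simp add: dL_def dR_def of_nat_diff)
  have "0 \<le> dL" "0 \<le> dR"
    using card_mono[OF finite_L Int_lower1, of S] card_mono[OF finite_R Int_lower1, of S] card_L card_R
    by (simp_all add: dL_def dR_def)
  moreover have "dL + dR \<le> real a"
    using less card_component_split[OF S] by (simp add: dL_def dR_def)
  ultimately show "real (card (L \<union> R - S)) \<le> 2 * e * real a"
    using deficit_le_2e[of "real a" dL dR e] component_deficit_bound[OF S dL_def dR_def] a_pos missing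
    by simp
qed

end

lemma sign_labeling_propagates:
  assumes S: "S = component V E x" and z: "sign_labeling S E xi z" and xi: "xi ` S \<subseteq> {-1, 1}"
    and "(link V E)\<^sup>*\<^sup>* x y"
  shows "z y * xi y = z x * xi x"
  using assms(4)
proof (induction rule: rtranclp_induct)
  case (step y w)
  then have "y \<in> S" and "w \<in> S" and "adj E y w"
    using S by (auto simp: component_def link_def intro: rtranclp.rtrancl_into_rtrancl)
  moreover have "\<And>C C'. C \<in> S \<Longrightarrow> C' \<in> S \<Longrightarrow> (C, C') \<in> E \<Longrightarrow> z C * z C' = xi C * xi C'"
    using z by (auto simp: sign_labeling_def)
  ultimately have "z y * z w = xi y * xi w"
    unfolding adj_def by (metis mult.commute)
  moreover have "z y \<in> {-1, 1}" "z w \<in> {-1, 1}" "xi y \<in> {-1, 1}" "xi w \<in> {-1, 1}"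
    using z xi \<open>y \<in> S\<close> \<open>w \<in> S\<close> by (auto simp: sign_labeling_def)
  ultimately have "z w * xi w = z y * xi y"
    by auto
  then show ?case
    using step.IH by simp
qed simp

lemma sign_labeling_eq_sign_times:
  assumes "x \<in> V" and S: "S = component V E x"
    and z: "sign_labeling S E xi z" and xi: "xi ` S \<subseteq> {-1, 1}"
  obtains c where "c \<in> {-1, 1}" and "\<forall>C\<in>S. z C = c * xi C"
proof -
  have x: "x \<in> S"
    using assms(1) S by (simp add: in_component_self)
  have sign_eq: "z C = z x * xi x * xi C" if C: "C \<in> S" for C
  proof -
    have "(link V E)\<^sup>*\<^sup>* x C"
      using C S by (simp add: component_def)
    then have "z C * xi C = z x * xi x"
      by (rule sign_labeling_propagates[OF S z xi])
    moreover have "xi C \<in> {-1, 1}"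
      using xi C by auto
    ultimately show ?thesis
      by auto
  qed
  have "z x \<in> {-1, 1}" and "xi x \<in> {-1, 1}"
    using z xi x by (auto simp: sign_labeling_def)
  then have "z x * xi x \<in> {-1, 1}"
    by auto
  with sign_eq show thesis
    using that by blast
qed

lemma majority_sign_recovers:
  fixes xi z0 z :: "'a \<Rightarrow> int"
  assumes "finite S" and xi: "xi ` S \<subseteq> {-1, 1}"
    and c: "c \<in> {-1, 1}" and z0: "\<forall>C\<in>S. z0 C = c * xi C"
    and flip: "card S < 2 * card {C \<in> S. z0 C = -1} \<longrightarrow> z = (\<lambda>C. - z0 C)"
    and keep: "2 * card {C \<in> S. z0 C = -1} < card S \<longrightarrow> z = z0"
    and minority: "2 * card {C \<in> S. xi C = -1} < card S"
  shows "{C \<in> S. z C = -1} = {C \<in> S. xi C = -1}"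
proof (cases "c = 1")
  case True
  then have "{C \<in> S. z0 C = -1} = {C \<in> S. xi C = -1}"
    using z0 by auto
  then show ?thesis
    using keep minority z0 True by auto
next
  case False
  then have c: "c = -1"
    using c by simp
  have "{C \<in> S. z0 C = -1} = S - {C \<in> S. xi C = -1}"
    using z0 xi c by force
  moreover have "card (S - {C \<in> S. xi C = -1}) = card S - card {C \<in> S. xi C = -1}"
    using assms(1) by (intro card_Diff_subset) auto
  ultimately have "card S < 2 * card {C \<in> S. z0 C = -1}"
    using minority by simp
  then show ?thesis
    using flip z0 c by auto
qed

lemma Pi_pmf_xi_values:
  assumes "finite A" and "xi \<in> set_pmf (Pi_pmf A 1 (\<lambda>_. xi_pmf \<eta>))" and "x \<in> A"
  shows "xi x \<in> {-1, 1}"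
proof -
  have "xi x \<in> set_pmf (xi_pmf \<eta>)"
    using assms(2,3) set_Pi_pmf[OF assms(1), of 1 "\<lambda>_. xi_pmf \<eta>"] by (auto simp: PiE_dflt_def)
  then show ?thesis
    by (auto simp: xi_pmf_def)
qed

lemma count_minus_one_binomial:
  assumes "finite A" and "B \<subseteq> A" and "0 \<le> \<eta>" and "\<eta> \<le> 1"
  shows "map_pmf (\<lambda>xi. card {x \<in> B. xi x = -1}) (Pi_pmf A 1 (\<lambda>_. xi_pmf \<eta>))
         = binomial_pmf (card B) \<eta>"
proof -
  define sign :: "bool \<Rightarrow> int" where "sign b = (if b then -1 else 1)" for b
  define restrict where "restrict f x = (if x \<in> B then f x else False)" for f :: "_ \<Rightarrow> bool" and x
  have count: "card {x \<in> B. sign (f x) = -1} = card {x \<in> B. restrict f x}" for f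
    by (rule arg_cong[where f = card]) (auto simp: sign_def restrict_def)
  have "Pi_pmf A 1 (\<lambda>_. xi_pmf \<eta>) = map_pmf ((\<circ>) sign) (Pi_pmf A False (\<lambda>_. bernoulli_pmf \<eta>))"
    unfolding xi_pmf_def using assms(1) by (subst Pi_pmf_map) (auto simp: sign_def[abs_def])
  then have "map_pmf (\<lambda>xi. card {x \<in> B. xi x = -1}) (Pi_pmf A 1 (\<lambda>_. xi_pmf \<eta>))
      = map_pmf (\<lambda>f. card {x \<in> B. f x}) (map_pmf restrict (Pi_pmf A False (\<lambda>_. bernoulli_pmf \<eta>)))"
    by (simp add: map_pmf_comp count)
  also have "map_pmf restrict (Pi_pmf A False (\<lambda>_. bernoulli_pmf \<eta>)) = Pi_pmf B False (\<lambda>_. bernoulli_pmf \<eta>)"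
    unfolding restrict_def[abs_def] using assms(1,2) by (rule Pi_pmf_subset[symmetric])
  also have "map_pmf (\<lambda>f. card {x \<in> B. f x}) \<dots> = binomial_pmf (card B) \<eta>"
    using assms finite_subset by (intro binomial_pmf_altdef'[symmetric]) auto
  finally show ?thesis .
qed

lemma prob_minus_one_majority_le:
  assumes "finite A" and "B \<subseteq> A" and "B \<noteq> {}" and "0 \<le> \<eta>" and "\<eta> < 1/2"
  shows "measure_pmf.prob (Pi_pmf A 1 (\<lambda>_. xi_pmf \<eta>)) {xi. card B \<le> 2 * card {x \<in> B. xi x = -1}}
         \<le> exp (- real (card B) * (1 - 2 * \<eta>)\<^sup>2 / 2)"
proof -
  let ?n = "card B"
  define \<delta> where "\<delta> = real ?n * (1/2 - \<eta>)"
  have n: "0 < ?n"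
    using assms(1-3) finite_subset card_gt_0_iff by blast
  have threshold: "{j. real ?n * \<eta> + \<delta> \<le> real j} = {j. ?n \<le> 2 * j}"
    by (auto simp: \<delta>_def algebra_simps)
  have "measure_pmf.prob (Pi_pmf A 1 (\<lambda>_. xi_pmf \<eta>)) {xi. ?n \<le> 2 * card {x \<in> B. xi x = -1}}
      = measure_pmf.prob (map_pmf (\<lambda>xi. card {x \<in> B. xi x = -1}) (Pi_pmf A 1 (\<lambda>_. xi_pmf \<eta>)))
          {j. ?n \<le> 2 * j}"
    by (simp add: vimage_def)
  also have "\<dots> = measure_pmf.prob (binomial_pmf ?n \<eta>) {j. real ?n * \<eta> + \<delta> \<le> real j}"
    using count_minus_one_binomial[OF assms(1,2,4)] assms(5) threshold
    by simp
  also have "\<dots> \<le> exp (-2 * \<delta>\<^sup>2 / real ?n)"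
    using assms(4,5) n by (intro binomial_distribution.prob_ge) (auto simp: binomial_distribution_def \<delta>_def)
  also have "-2 * \<delta>\<^sup>2 / real ?n = - real ?n * (1 - 2 * \<eta>)\<^sup>2 / 2"
    using n by (simp add: \<delta>_def power2_eq_square field_simps)
  finally show ?thesis .
qed

lemma card_filter_Times_singleton: "card {x \<in> {u} \<times> S. Q x} = card {y \<in> S. Q (u, y)}"
proof -
  have "{x \<in> {u} \<times> S. Q x} = Pair u ` {y \<in> S. Q (u, y)}"
    by auto
  then show ?thesis
    by (simp add: card_image inj_on_def)
qed

lemma mult_exp_le_inverse_power:
  fixes t :: real
  assumes "2 \<le> n" and "p \<le> n ^ k" and "2 * real k * ln (real n) \<le> t"
  shows "real p * exp (- t) \<le> 1 / real n ^ k"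
proof -
  have "exp (real (2 * k) * ln (real n)) = real n ^ (2 * k)"
    using assms(1) by (subst exp_of_nat_mult) simp
  then have "exp (- (real (2 * k) * ln (real n))) = 1 / real n ^ (2 * k)"
    by (simp add: exp_minus inverse_eq_divide)
  moreover have "exp (- t) \<le> exp (- (real (2 * k) * ln (real n)))"
    using assms(3) by simp
  ultimately have "exp (- t) \<le> 1 / real n ^ (2 * k)"
    by simp
  then have "real p * exp (- t) \<le> real (n ^ k) * (1 / real n ^ (2 * k))"
    using assms(2) by (intro mult_mono) auto
  also have "\<dots> = 1 / real n ^ k"
    using assms(1) by (simp add: power_mult mult_2 power_add)
  finally show ?thesis .
qed

lemma hoeffding_exponent_ge:
  fixes a d :: real
  assumes "1 \<le> k" and "2 \<le> n" and "0 < d" and "24 * real k / d * ln (real n) \<le> 2 * a"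
  shows "0 < a" and "2 * real k * ln (real n) \<le> a * d / 2"
proof -
  have kn: "0 < real k * ln (real n)"
    using assms(1,2) by simp
  have "0 < 24 * (real k * ln (real n)) / d"
    using kn assms(3) by simp
  then show "0 < a"
    using assms(4) by (simp add: algebra_simps)
  have "24 * real k / d * ln (real n) * d \<le> 2 * a * d"
    using mult_right_mono[OF assms(4), of d] assms(3) by simp
  then have "24 * (real k * ln (real n)) \<le> 2 * a * d"
    using assms(3) by (simp add: algebra_simps)
  then show "2 * real k * ln (real n) \<le> a * d / 2"
    using kn by simp
qed

text \<open>The parameter \<open>a\<close> stands for \<open>m / (2 p)\<close>, the common size of the two halves of a block.\<close>
locale paired_blocks =
  fixes p a :: nat and L R :: "nat \<Rightarrow> 'a set" and P :: "nat \<Rightarrow> ('a \<times> 'a) set"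
    and eps :: "nat \<Rightarrow> real"
  assumes finite_blocks: "u \<in> {1..p} \<Longrightarrow> finite (L u) \<and> finite (R u)"
    and disjoint_blocks: "u \<in> {1..p} \<Longrightarrow> L u \<inter> R u = {}"
    and card_blocks: "u \<in> {1..p} \<Longrightarrow> card (L u) = a \<and> card (R u) = a"
    and pairs_subset: "u \<in> {1..p} \<Longrightarrow> P u \<subseteq> L u \<times> R u"
    and card_pairs: "u \<in> {1..p} \<Longrightarrow> real (card (P u)) = (1 - eps u) * real a ^ 2"
    and eps_nonneg: "u \<in> {1..p} \<Longrightarrow> 0 \<le> eps u"
    and a_pos: "0 < a"
begin

abbreviation H :: "nat \<Rightarrow> 'a set" where
  "H u \<equiv> L u \<union> R u"

lemma card_H: "u \<in> {1..p} \<Longrightarrow> card (H u) = 2 * a"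
  using finite_blocks disjoint_blocks card_blocks by (simp add: card_Un_disjoint)

lemma dense_block:
  "u \<in> {1..p} \<Longrightarrow> eps u < 1/3 \<Longrightarrow> dense_bipartite_graph (L u) (R u) (P u) a (eps u)"
  using finite_blocks disjoint_blocks card_blocks pairs_subset card_pairs a_pos
  by unfold_locales auto

definition giant :: "nat \<Rightarrow> 'a set" where
  "giant u = (THE S. is_largest_component (H u) (P u) S)"

lemma largest_component_eq_giant:
  assumes "u \<in> {1..p}" and "eps u < 1/3"
  shows "is_largest_component (H u) (P u) S \<longleftrightarrow> S = giant u"
  using dense_bipartite_graph.ex1_largest_component[OF dense_block[OF assms]]
  unfolding giant_def by (metis the_equality)

lemma card_output_A1:
  assumes out: "procedure_output p H P eps xi A1 A2" and u: "u \<in> {1..p}"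
  shows "real (card (A1 u)) \<le> 4 * eps u * real (card (H u))"
proof (cases "1/3 \<le> eps u")
  case True
  then have "A1 u = H u"
    using out u by (simp add: procedure_output_def)
  moreover have "real (card (H u)) * 1 \<le> real (card (H u)) * (4 * eps u)"
    using True by (intro mult_left_mono) auto
  ultimately show ?thesis
    by (simp add: algebra_simps)
next
  case False
  with out[unfolded procedure_output_def, rule_format, OF u]
  obtain S where S: "is_largest_component (H u) (P u) S" and A1: "A1 u = H u - S"
    by auto
  have "real (card (H u - S)) \<le> 2 * eps u * real a"
    using dense_bipartite_graph.largest_component_size(2)[OF dense_block[OF u] S] False by simp
  also have "\<dots> \<le> 4 * eps u * real (card (H u))"
    using eps_nonneg[OF u] card_H[OF u] by simp
  finally show ?thesis
    using A1 by simp
qed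

lemma sum_card_output_A1:
  assumes "procedure_output p H P eps xi A1 A2"
    and "0 < p" and "(1 / real p) * (\<Sum>u\<in>{1..p}. eps u) \<le> \<epsilon>"
  shows "(\<Sum>u\<in>{1..p}. real (card (A1 u))) \<le> 4 * \<epsilon> * (2 * real p * real a)"
proof -
  have "(\<Sum>u\<in>{1..p}. real (card (A1 u))) \<le> (\<Sum>u\<in>{1..p}. 4 * eps u * real (card (H u)))"
    using card_output_A1[OF assms(1)] by (rule sum_mono)
  also have "\<dots> = 8 * real a * (\<Sum>u\<in>{1..p}. eps u)"
    using card_H by (simp add: sum_distrib_left algebra_simps)
  also have "\<dots> \<le> 8 * real a * (real p * \<epsilon>)"
    using assms(2,3) by (intro mult_left_mono) (auto simp: field_simps)
  finally show ?thesis
    by (simp add: algebra_simps)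
qed

lemma output_correct_on_block:
  assumes out: "procedure_output p H P eps xi A1 A2" and u: "u \<in> {1..p}"
    and xi: "\<forall>C\<in>H u. xi (u, C) \<in> {-1, 1}"
    and minority: "eps u < 1/3 \<Longrightarrow> 2 * card {C \<in> giant u. xi (u, C) = -1} < card (giant u)"
  shows "A2 u = {C \<in> H u. xi (u, C) = -1} - A1 u"
proof (cases "1/3 \<le> eps u")
  case True
  then show ?thesis
    using out u by (auto simp: procedure_output_def)
next
  case False
  then obtain S z0 z where S: "is_largest_component (H u) (P u) S"
    and z0: "sign_labeling S (P u) (\<lambda>C. xi (u, C)) z0"
    and flip: "card S < 2 * card {C \<in> S. z0 C = -1} \<longrightarrow> z = (\<lambda>C. - z0 C)"
    and keep: "2 * card {C \<in> S. z0 C = -1} < card S \<longrightarrow> z = z0"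
    and A1: "A1 u = H u - S" and A2: "A2 u = {C \<in> S. z C = -1}"
    using out[unfolded procedure_output_def, rule_format, OF u] by auto
  obtain x where x: "x \<in> H u" "S = component (H u) (P u) x"
    using S by (auto simp: is_largest_component_def is_conn_component_iff)
  have SH: "S \<subseteq> H u"
    using largest_component_subset[OF S] .
  have xiS: "(\<lambda>C. xi (u, C)) ` S \<subseteq> {-1, 1}"
    using xi SH by auto
  then obtain c where "c \<in> {-1, 1}" "\<forall>C\<in>S. z0 C = c * xi (u, C)"
    using sign_labeling_eq_sign_times[OF x z0] by blast
  moreover have "finite S"
    using SH finite_blocks[OF u] finite_subset by blast
  moreover have "2 * card {C \<in> S. xi (u, C) = -1} < card S"
    using minority False largest_component_eq_giant[OF u] S by force
  ultimately have "{C \<in> S. z C = -1} = {C \<in> S. xi (u, C) = -1}"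
    using majority_sign_recovers[OF _ xiS _ _ flip keep] by blast
  then show ?thesis
    using A1 A2 SH by auto
qed

lemma finite_block_indices: "finite (SIGMA u:{1..p}. H u)"
  using finite_blocks by auto

lemma prob_giant_not_minority_le:
  assumes u: "u \<in> {1..p}" and small: "eps u < 1/3" and "0 \<le> \<eta>" and "\<eta> < 1/2"
  shows "measure_pmf.prob (xi_dist p H \<eta>)
           {xi. card (giant u) \<le> 2 * card {C \<in> giant u. xi (u, C) = -1}}
         \<le> exp (- real a * (1 - 2 * \<eta>)\<^sup>2 / 2)"
proof -
  have largest: "is_largest_component (H u) (P u) (giant u)"
    using largest_component_eq_giant[OF u small] by simp
  then have size: "real a < real (card (giant u))"
    using dense_bipartite_graph.largest_component_size(1)[OF dense_block[OF u small]] by simp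
  let ?B = "{u} \<times> giant u"
  have B: "?B \<subseteq> (SIGMA u:{1..p}. H u)" "?B \<noteq> {}" and card_B: "card ?B = card (giant u)"
    using largest_component_subset[OF largest] u size by (auto simp: card_cartesian_product)
  have events_eq: "{xi. card (giant u) \<le> 2 * card {C \<in> giant u. xi (u, C) = -1}}
      = {xi. card ?B \<le> 2 * card {x \<in> ?B. xi x = -1}}"
    by (simp add: card_B card_filter_Times_singleton)
  have "measure_pmf.prob (xi_dist p H \<eta>)
      {xi. card (giant u) \<le> 2 * card {C \<in> giant u. xi (u, C) = -1}}
      \<le> exp (- real (card (giant u)) * (1 - 2 * \<eta>)\<^sup>2 / 2)"
    using prob_minus_one_majority_le[OF finite_block_indices B assms(3,4)]
    unfolding events_eq xi_dist_def card_B .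
  also have "\<dots> \<le> exp (- real a * (1 - 2 * \<eta>)\<^sup>2 / 2)"
    using size by (simp add: mult_right_mono)
  finally show ?thesis .
qed

lemma prob_output_correct:
  assumes "0 \<le> \<eta>" and "\<eta> < 1/2"
  shows "1 - real p * exp (- real a * (1 - 2 * \<eta>)\<^sup>2 / 2)
    \<le> measure_pmf.prob (xi_dist p H \<eta>)
         {xi. \<forall>A1 A2. procedure_output p H P eps xi A1 A2 \<longrightarrow>
                (\<forall>u\<in>{1..p}. A2 u = {C \<in> H u. xi (u, C) = -1} - A1 u)}"
    (is "_ \<le> measure_pmf.prob ?M ?T")
proof -
  define U where "U = {u \<in> {1..p}. eps u < 1/3}"
  define bad :: "nat \<Rightarrow> (nat \<times> 'a \<Rightarrow> int) set"
    where "bad u = {xi. card (giant u) \<le> 2 * card {C \<in> giant u. xi (u, C) = -1}}" for u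
  have "xi \<in> ?T" if xi: "xi \<in> set_pmf ?M" and good: "xi \<notin> (\<Union>u\<in>U. bad u)" for xi
  proof (intro CollectI allI impI ballI)
    fix A1 A2 u
    assume out: "procedure_output p H P eps xi A1 A2" and u: "u \<in> {1..p}"
    have "\<forall>C\<in>H u. xi (u, C) \<in> {-1, 1}"
      using Pi_pmf_xi_values[OF finite_block_indices] xi u by (auto simp: xi_dist_def)
    moreover have "eps u < 1/3 \<Longrightarrow> 2 * card {C \<in> giant u. xi (u, C) = -1} < card (giant u)"
      using good u by (auto simp: U_def bad_def)
    ultimately show "A2 u = {C \<in> H u. xi (u, C) = -1} - A1 u"
      by (rule output_correct_on_block[OF out u])
  qed
  then have "- ?T \<inter> set_pmf ?M \<subseteq> (\<Union>u\<in>U. bad u)"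
    by blast
  then have "measure_pmf.prob ?M (- ?T \<inter> set_pmf ?M) \<le> measure_pmf.prob ?M (\<Union>u\<in>U. bad u)"
    by (rule measure_pmf.finite_measure_mono) simp
  then have "measure_pmf.prob ?M (- ?T) \<le> measure_pmf.prob ?M (\<Union>u\<in>U. bad u)"
    by (simp add: measure_Int_set_pmf)
  also have "\<dots> \<le> (\<Sum>u\<in>U. measure_pmf.prob ?M (bad u))"
    by (intro measure_pmf.finite_measure_subadditive_finite) (auto simp: U_def)
  also have "\<dots> \<le> (\<Sum>u\<in>U. exp (- real a * (1 - 2 * \<eta>)\<^sup>2 / 2))"
    using prob_giant_not_minority_le[OF _ _ assms] by (intro sum_mono) (auto simp: U_def bad_def)
  also have "\<dots> \<le> real p * exp (- real a * (1 - 2 * \<eta>)\<^sup>2 / 2)"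
  proof -
    have "card U \<le> card {1..p}"
      by (rule card_mono) (auto simp: U_def)
    then show ?thesis
      by (simp add: mult_right_mono)
  qed
  finally have "measure_pmf.prob ?M (UNIV - ?T) \<le> real p * exp (- real a * (1 - 2 * \<eta>)\<^sup>2 / 2)"
    by (simp only: Compl_eq_Diff_UNIV)
  moreover have "measure_pmf.prob ?M (UNIV - ?T) = 1 - measure_pmf.prob ?M ?T"
    using measure_pmf.prob_compl[of ?T ?M] by simp
  ultimately show ?thesis
    by linarith
qed

end

theorem mainTheorem13:
  fixes k n p m :: nat and \<eta> \<epsilon> :: real and eps :: "nat \<Rightarrow> real"
    and L R :: "nat \<Rightarrow> 'a set" and P :: "nat \<Rightarrow> ('a \<times> 'a) set"
  assumes "k \<ge> 1" and "n \<ge> 2" and "0 \<le> \<eta>" and "\<eta> < 1/2"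
    and "1 \<le> p" and "p \<le> n ^ k"
    and "real m / real p \<ge> 24 * real k / (1 - 2 * \<eta>)^2 * ln (real n)"
    and "\<forall>u\<in>{1..p}. finite (L u) \<and> finite (R u) \<and> L u \<inter> R u = {} \<and>
           real (card (L u)) = real m / (2 * real p) \<and> real (card (R u)) = real m / (2 * real p)"
    and "\<forall>u\<in>{1..p}. P u \<subseteq> L u \<times> R u \<and> 0 \<le> eps u \<and> eps u \<le> 1 \<and>
           real (card (P u)) = (1 - eps u) * real m ^ 2 / (4 * real p ^ 2)"
    and "(1 / real p) * (\<Sum>u\<in>{1..p}. eps u) \<le> \<epsilon>"
  shows "(\<forall>xi A1 A2. procedure_output p (\<lambda>u. L u \<union> R u) P eps xi A1 A2 \<longrightarrow>
            (\<Sum>u\<in>{1..p}. real (card (A1 u))) \<le> 4 * \<epsilon> * real m)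
       \<and> measure_pmf.prob (xi_dist p (\<lambda>u. L u \<union> R u) \<eta>)
           {xi. \<forall>A1 A2. procedure_output p (\<lambda>u. L u \<union> R u) P eps xi A1 A2 \<longrightarrow>
                  (\<forall>u\<in>{1..p}. A2 u = {C \<in> L u \<union> R u. xi (u, C) = -1} - A1 u)}
         \<ge> 1 - 1 / real n ^ k"
proof -
  define a where "a = card (L 1)"
  have a_eq: "real m / (2 * real p) = real a"
    using assms(5,8) by (simp add: a_def)
  then have m_eq: "real m = 2 * real p * real a"
    using assms(5) by (simp add: field_simps)
  have "0 < (1 - 2 * \<eta>)^2"
    using assms(4) by simp
  moreover have "24 * real k / (1 - 2 * \<eta>)^2 * ln (real n) \<le> 2 * real a"
    using assms(5,7) m_eq by simp
  ultimately have a_pos: "0 < real a"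
    and tail: "2 * real k * ln (real n) \<le> real a * (1 - 2 * \<eta>)^2 / 2"
    using hoeffding_exponent_ge[OF assms(1,2)] by blast+
  have a_sq: "(1 - eps u) * real m ^ 2 / (4 * real p ^ 2) = (1 - eps u) * real a ^ 2" for u
    by (simp add: power_divide power_mult_distrib flip: a_eq)
  interpret paired_blocks p a L R P eps
    using assms(8,9) a_pos by unfold_locales (auto simp: a_eq a_sq)
  have "\<forall>xi A1 A2. procedure_output p H P eps xi A1 A2 \<longrightarrow>
      (\<Sum>u\<in>{1..p}. real (card (A1 u))) \<le> 4 * \<epsilon> * real m"
    using sum_card_output_A1 assms(5,10) m_eq by simp
  moreover have "1 - 1 / real n ^ k \<le> 1 - real p * exp (- real a * (1 - 2 * \<eta>)^2 / 2)"
    using mult_exp_le_inverse_power[OF assms(2,6) tail] by simp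
  then have "1 - 1 / real n ^ k \<le> measure_pmf.prob (xi_dist p H \<eta>)
      {xi. \<forall>A1 A2. procedure_output p H P eps xi A1 A2 \<longrightarrow>
             (\<forall>u\<in>{1..p}. A2 u = {C \<in> H u. xi (u, C) = -1} - A1 u)}"
    using prob_output_correct[OF assms(3,4)] by linarith
  ultimately show ?thesis
    by blast
qed

end
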